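(* Let $(V,\mathcal{G},\mathcal{B})$ be a $(v,g,k,\lambda)_q$-GDD with $2\le g\le k$. Then $q^{k-g}$ divides $\lambda$.
   Context: Let $q$ be a prime power and $v,g,k,\lambda$ positive integers. A $(v,g,k,\lambda)_q$-GDD ($q$-analog of a group divisible design) is a triple $(V,\mathcal{G},\mathcal{B})$ where $V$ is a $v$-dimensional vector space over $\mathrm{GF}(q)$; $\mathcal{G}$ is a set of $g$-dimensional subspaces of $V$ (groups) such that every $1$-dimensional subspace of $V$ lies in exactly one element of $\mathcal{G}$, and $\#\mathcal{G}>1$; $\mathcal{B}$ is a set of $k$-dimensional subspaces of $V$ (blocks); and every $2$-dimensional subspace of $V$ is either contained in exactly one element of $\mathcal{G}$ and in no block, or contained in no element of $\mathcal{G}$ and in exactly $\lambda$ blocks. *)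

theory Defs
  imports "HOL-Analysis.Cartesian_Space"
begin

text \<open>The ambient space V is the standard space ('a^'n) over the finite field 'a
  (so q = CARD('a), v = CARD('n)).\<close>

definition subspaces_of_dim :: "nat \<Rightarrow> ('a::field ^ 'n) set set" where
  "subspaces_of_dim d = {S. vec.subspace S \<and> vec.dim S = d}"

definition is_q_GDD ::
  "nat \<Rightarrow> nat \<Rightarrow> nat \<Rightarrow> ('a::{finite,field} ^ 'n) set set \<Rightarrow> ('a ^ 'n) set set \<Rightarrow> bool" where
  "is_q_GDD g k lam G B \<longleftrightarrow>
     0 < g \<and> 0 < k \<and> 0 < lam \<and>
     G \<subseteq> subspaces_of_dim g \<and>
     (\<forall>P \<in> subspaces_of_dim 1. \<exists>!X. X \<in> G \<and> P \<subseteq> X) \<and>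
     card G > 1 \<and>
     B \<subseteq> subspaces_of_dim k \<and>
     (\<forall>L \<in> subspaces_of_dim 2.
        ((\<exists>!X. X \<in> G \<and> L \<subseteq> X) \<and> (\<forall>b \<in> B. \<not> L \<subseteq> b)) \<or>
        ((\<forall>X \<in> G. \<not> L \<subseteq> X) \<and> card {b \<in> B. L \<subseteq> b} = lam))"

end

theory Submission
  imports Defs
begin

(* Fix a nonzero vector x in a group X and a linear functional f with f x = 0 that does not
   vanish on X, and double count incidences between the blocks through x and the points of the
   affine hyperplane Y = {f = 1}. For y in Y, the 2-dimensional subspace spanned by x and y lies
   in X if y is in X and otherwise in no group, hence in exactly lam blocks; so the count is
   lam * |Y - X| = lam * (q^(v-1) - q^(g-1)). On the other hand every block meets Y in 0 or
   q^(k-1) points. Hence q^(k-1) divides lam * q^(g-1) * (q^(v-g) - 1), and since q^(v-g) - 1 is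
   prime to q, q^(k-g) divides lam. *)

lemma card_span_independent:
  fixes B :: "('a::{finite,field} ^ 'n) set"
  assumes "vec.independent B"
  shows "card (vec.span B) = CARD('a) ^ card B"
  using finite[of B] assms
proof (induction B rule: finite_induct)
  case empty
  then show ?case by (simp add: vec.span_empty)
next
  case (insert a B)
  then have indep: "vec.independent B" and a: "a \<notin> vec.span B"
    by (auto simp: vec.independent_insert)
  let ?h = "\<lambda>(c, w). c *s a + w"
  have "inj_on ?h (UNIV \<times> vec.span B)"
  proof (rule inj_onI, clarsimp)
    fix c1 c2 :: 'a and w1 w2
    assume w: "w1 \<in> vec.span B" "w2 \<in> vec.span B" and eq: "c1 *s a + w1 = c2 *s a + w2"
    have "c1 = c2"
    proof (rule ccontr)
      assume "c1 \<noteq> c2"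
      have "(c1 - c2) *s a = w2 - w1"
        using eq by (simp add: algebra_simps vector_sub_rdistrib)
      then have "a = inverse (c1 - c2) *s (w2 - w1)"
        using \<open>c1 \<noteq> c2\<close>
        by (metis eq_iff_diff_eq_0 vector_smult_assoc vector_smult_lid field_class.field_inverse)
      then have "a \<in> vec.span B"
        using w by (simp add: vec.span_diff vec.span_scale)
      with a show False ..
    qed
    with eq show "c1 = c2 \<and> w1 = w2" by simp
  qed
  moreover have "?h ` (UNIV \<times> vec.span B) = vec.span (insert a B)"
  proof (intro equalityI subsetI)
    fix y assume "y \<in> ?h ` (UNIV \<times> vec.span B)"
    then obtain c w where "y = c *s a + w" "w \<in> vec.span B"
      by auto
    then show "y \<in> vec.span (insert a B)"
      unfolding vec.span_insert by (intro CollectI exI[of _ c]) simp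
  next
    fix y assume "y \<in> vec.span (insert a B)"
    then obtain c where "y - c *s a \<in> vec.span B"
      by (auto simp: vec.span_insert)
    then show "y \<in> ?h ` (UNIV \<times> vec.span B)"
      by (intro image_eqI[of _ _ "(c, y - c *s a)"]) auto
  qed
  ultimately have "card (vec.span (insert a B)) = card ((UNIV :: 'a set) \<times> vec.span B)"
    using card_image by fastforce
  then show ?case
    using insert.IH[OF indep] insert.hyps by (simp add: card_cartesian_product)
qed

lemma card_subspace:
  fixes S :: "('a::{finite,field} ^ 'n) set"
  assumes "vec.subspace S"
  shows "card S = CARD('a) ^ vec.dim S"
proof -
  obtain E where E: "E \<subseteq> S" "vec.independent E" "S \<subseteq> vec.span E" "card E = vec.dim S"
    using vec.basis_exists by blast
  then have "vec.span E = S"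
    using assms by (simp add: vec.span_subspace)
  then show ?thesis
    using card_span_independent[OF E(2)] E(4) by simp
qed

lemma subspaces_of_dim_span_independent:
  "vec.independent A \<Longrightarrow> vec.span A \<in> subspaces_of_dim (card A)"
  by (simp add: subspaces_of_dim_def vec.subspace_span vec.dim_span vec.dim_eq_card_independent)

lemma subspace_obtain_independent_pair:
  fixes S :: "('a::field ^ 'n) set"
  assumes "vec.subspace S" "2 \<le> vec.dim S"
  obtains x z where "x \<in> S" "z \<in> S" "x \<noteq> 0" "z \<notin> vec.span {x}"
proof -
  obtain E where E: "E \<subseteq> S" "vec.independent E" "S \<subseteq> vec.span E" "card E = vec.dim S"
    using vec.basis_exists by blast
  have "finite E"
    using assms(2) E(4) by (intro card_ge_0_finite) simp
  moreover have "\<not> card E \<le> Suc 0"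
    using assms(2) E(4) by simp
  ultimately obtain x z where xz: "x \<in> E" "z \<in> E" "x \<noteq> z"
    by (auto simp: card_le_Suc0_iff_eq)
  have "vec.independent {z, x}"
    using xz by (intro vec.independent_mono[OF E(2)]) auto
  then have "x \<noteq> 0" "z \<notin> vec.span {x}"
    using xz(3) by (auto simp: vec.independent_insert vec.span_empty)
  moreover have "x \<in> S" "z \<in> S"
    using xz E(1) by auto
  ultimately show thesis
    by (intro that)
qed

lemma exists_linear_functional_separating:
  fixes x z :: "'a::field ^ 'n"
  assumes "x \<noteq> 0" "z \<notin> vec.span {x}"
  shows "\<exists>f. Vector_Spaces.linear (*s) (*) f \<and> f x = 0 \<and> f z = 1"
proof -
  have "z \<noteq> x"
    using assms(2) vec.span_base by blast
  have indep: "vec.independent {z, x}"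
    using assms by (simp add: vec.independent_insert vec.span_empty)
  define E where "E = vec.extend_basis {z, x}"
  have E: "vec.independent E" "vec.span E = UNIV" "{z, x} \<subseteq> E"
    using vec.independent_extend_basis[OF indep] vec.span_extend_basis[OF indep]
      vec.extend_basis_superset[OF indep] by (simp_all add: E_def)
  show ?thesis
    using E \<open>z \<noteq> x\<close>
    by (intro exI[of _ "\<lambda>y. vec.representation E y z"])
      (auto simp: vec.linear_representation vec.representation_basis)
qed

lemma card_level_set:
  fixes S :: "('a::{finite,field} ^ 'n) set" and f :: "'a ^ 'n \<Rightarrow> 'a"
  assumes f: "Vector_Spaces.linear (*s) (*) f" and S: "vec.subspace S"
    and a: "a \<in> S" "f a \<noteq> 0"
  shows "card {y \<in> S. f y = 1} = CARD('a) ^ (vec.dim S - 1)"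
proof -
  have add: "f (u + w) = f u + f w" and scale: "f (c *s u) = c * f u" for u w c
    using f by (simp_all add: Vector_Spaces.linear_iff)
  define e where "e = inverse (f a) *s a"
  have e: "e \<in> S" "f e = 1"
    using a S by (simp_all add: e_def scale vec.subspace_scale)
  let ?L = "{y \<in> S. f y = 1}"
  let ?h = "\<lambda>(c, w). w + (c - 1) *s e"
  have f_h: "f (?h (c, w)) = c" if "w \<in> ?L" for c w
    using that e by (simp add: add scale)
  have "inj_on ?h (UNIV \<times> ?L)"
  proof (rule inj_onI, clarsimp)
    fix c1 c2 w1 w2
    assume "w1 \<in> S" "f w1 = 1" "w2 \<in> S" "f w2 = 1" and eq: "w1 + (c1 - 1) *s e = w2 + (c2 - 1) *s e"
    then have "c1 = c2"
      using f_h[of w1 c1] f_h[of w2 c2] by simp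
    with eq show "c1 = c2 \<and> w1 = w2" by simp
  qed
  moreover have "?h ` (UNIV \<times> ?L) = S"
  proof (intro equalityI subsetI)
    fix y assume "y \<in> ?h ` (UNIV \<times> ?L)"
    then show "y \<in> S"
      using S e by (auto simp: vec.subspace_add vec.subspace_scale)
  next
    fix y assume "y \<in> S"
    moreover have "f (y - (f y - 1) *s e) = 1"
      using add[of "y - (f y - 1) *s e" "(f y - 1) *s e"] e by (simp add: scale)
    ultimately show "y \<in> ?h ` (UNIV \<times> ?L)"
      using S e by (intro image_eqI[of _ _ "(f y, y - (f y - 1) *s e)"])
        (auto simp: vec.subspace_diff vec.subspace_scale)
  qed
  ultimately have "card S = CARD('a) * card ?L"
    using card_image[of ?h] by (fastforce simp: card_cartesian_product)
  moreover have "vec.dim S \<noteq> 0"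
    using a scale[of 0 0] by (auto simp: vec.dim_eq_0)
  ultimately show ?thesis
    using card_subspace[OF S] by (cases "vec.dim S") auto
qed

lemma power_dvd_card_level_set:
  fixes S :: "('a::{finite,field} ^ 'n) set"
  assumes "Vector_Spaces.linear (*s) (*) f" "vec.subspace S"
  shows "CARD('a) ^ (vec.dim S - 1) dvd card {y \<in> S. f y = 1}"
proof (cases "\<exists>a \<in> S. f a \<noteq> 0")
  case True
  then show ?thesis
    using card_level_set[OF assms] by auto
next
  case False
  then have "{y \<in> S. f y = 1} = {}" by auto
  then show ?thesis by (metis card.empty dvd_0_right)
qed

lemma power_dvd_of_power_dvd_mult_power_diff:
  fixes q :: nat
  assumes "q ^ (e + m) dvd (q ^ (e + n) - q ^ e) * c" "0 < q" "0 < n"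
  shows "q ^ m dvd c"
proof -
  have "q ^ (e + n) - q ^ e = q ^ e * (q ^ n - 1)"
    by (simp add: power_add diff_mult_distrib2)
  then have "q ^ m dvd (q ^ n - 1) * c"
    using assms(1,2) by (simp add: power_add mult.assoc)
  moreover have "coprime (q ^ m) (q ^ n - 1)"
    using assms(2,3) coprime_diff_one_left_nat[of "q ^ n"]
    by (simp add: coprime_commute)
  ultimately show ?thesis
    by (simp add: coprime_dvd_mult_right_iff)
qed

lemma q_GDD_group_subspace:
  assumes "is_q_GDD g k lam G B" "X \<in> G"
  shows "vec.subspace X" "vec.dim X = g"
  using assms by (auto simp: is_q_GDD_def subspaces_of_dim_def)

lemma q_GDD_block_subspace:
  assumes "is_q_GDD g k lam G B" "b \<in> B"
  shows "vec.subspace b" "vec.dim b = k"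
  using assms by (auto simp: is_q_GDD_def subspaces_of_dim_def)

lemma q_GDD_group_of_point_unique:
  assumes GDD: "is_q_GDD g k lam G B" and "X \<in> G" "X' \<in> G" "x \<in> X" "x \<in> X'" "x \<noteq> 0"
  shows "X = X'"
proof -
  have "vec.independent {x}"
    using \<open>x \<noteq> 0\<close> by (simp add: vec.independent_insert vec.span_empty)
  then have "vec.span {x} \<in> subspaces_of_dim 1"
    using subspaces_of_dim_span_independent[of "{x}"] by simp
  moreover have "vec.span {x} \<subseteq> X" "vec.span {x} \<subseteq> X'"
    using assms(2-5) q_GDD_group_subspace(1)[OF GDD] vec.span_minimal[of "{x}"] by auto
  moreover have "\<forall>P \<in> subspaces_of_dim 1. \<exists>!Y. Y \<in> G \<and> P \<subseteq> Y"
    using GDD by (simp add: is_q_GDD_def)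
  ultimately show ?thesis
    using \<open>X \<in> G\<close> \<open>X' \<in> G\<close> by blast
qed

lemma q_GDD_group_ne_UNIV:
  assumes GDD: "is_q_GDD g k lam G B" and X: "X \<in> G"
  shows "X \<noteq> UNIV"
proof
  assume "X = UNIV"
  have "1 < card G" "0 < g"
    using GDD by (simp_all add: is_q_GDD_def)
  then have "\<not> G \<subseteq> {X}"
    using card_mono[of "{X}" G] by auto
  then obtain X' where X': "X' \<in> G" "X' \<noteq> X" by blast
  then have "vec.dim X' \<noteq> 0"
    using q_GDD_group_subspace(2)[OF GDD] \<open>0 < g\<close> by simp
  then obtain x where "x \<in> X'" "x \<noteq> 0"
    by (auto simp: vec.dim_eq_0)
  then have "X' = X"
    using q_GDD_group_of_point_unique[OF GDD X'(1) X] \<open>X = UNIV\<close> by blast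
  with X'(2) show False ..
qed

lemma q_GDD_group_dim_less:
  fixes G B :: "('a::{finite,field} ^ 'n) set set"
  assumes "is_q_GDD g k lam G B" "X \<in> G"
  shows "g < vec.dim (UNIV :: ('a ^ 'n) set)"
proof (rule ccontr)
  assume "\<not> g < vec.dim (UNIV :: ('a ^ 'n) set)"
  then have "X = UNIV"
    using vec.subspace_dim_equal[OF q_GDD_group_subspace(1)[OF assms] vec.subspace_UNIV]
      q_GDD_group_subspace(2)[OF assms] by simp
  with q_GDD_group_ne_UNIV[OF assms] show False ..
qed

lemma q_GDD_blocks_through_two_points:
  assumes GDD: "is_q_GDD g k lam G B" and X: "X \<in> G" "x \<in> X" "x \<noteq> 0"
    and y: "y \<notin> vec.span {x}"
  shows "card {b \<in> B. x \<in> b \<and> y \<in> b} = (if y \<in> X then 0 else lam)"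
proof -
  define L where "L = vec.span {y, x}"
  have "y \<noteq> x"
    using y vec.span_base by blast
  have "vec.independent {y, x}"
    using X(3) y by (simp add: vec.independent_insert vec.span_empty)
  then have L: "L \<in> subspaces_of_dim 2"
    using subspaces_of_dim_span_independent[of "{y, x}"] \<open>y \<noteq> x\<close> by (simp add: L_def numeral_2_eq_2)
  have span_le: "L \<subseteq> S \<longleftrightarrow> x \<in> S \<and> y \<in> S" if "vec.subspace S" for S
    unfolding L_def using that vec.span_minimal[of "{y, x}" S] vec.span_base[of _ "{y, x}"] by blast
  have blocks: "{b \<in> B. x \<in> b \<and> y \<in> b} = {b \<in> B. L \<subseteq> b}"
    using q_GDD_block_subspace(1)[OF GDD] span_le by blast
  have groups: "L \<subseteq> X' \<longleftrightarrow> X' = X \<and> y \<in> X" if "X' \<in> G" for X'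
    using span_le[OF q_GDD_group_subspace(1)[OF GDD that]]
      q_GDD_group_of_point_unique[OF GDD that X(1) _ X(2,3)] X(2) by blast
  have "\<forall>L \<in> subspaces_of_dim 2.
      ((\<exists>!X. X \<in> G \<and> L \<subseteq> X) \<and> (\<forall>b \<in> B. \<not> L \<subseteq> b)) \<or>
      ((\<forall>X \<in> G. \<not> L \<subseteq> X) \<and> card {b \<in> B. L \<subseteq> b} = lam)"
    using GDD by (simp add: is_q_GDD_def)
  then have line_cases:
    "((\<exists>!X. X \<in> G \<and> L \<subseteq> X) \<and> (\<forall>b \<in> B. \<not> L \<subseteq> b)) \<or>
     ((\<forall>X \<in> G. \<not> L \<subseteq> X) \<and> card {b \<in> B. L \<subseteq> b} = lam)"
    using L by (rule bspec)
  show ?thesis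
  proof (cases "y \<in> X")
    case True
    then have "L \<subseteq> X"
      using groups[OF X(1)] by simp
    with line_cases X(1) have "\<forall>b \<in> B. \<not> L \<subseteq> b"
      by blast
    with True blocks show ?thesis by simp
  next
    case False
    then have "\<forall>X' \<in> G. \<not> L \<subseteq> X'"
      using groups by blast
    with line_cases have "card {b \<in> B. L \<subseteq> b} = lam"
      by (meson ex1_implies_ex)
    with False blocks show ?thesis by simp
  qed
qed

lemma q_GDD_incidences_affine_hyperplane:
  assumes GDD: "is_q_GDD g k lam G B" and X: "X \<in> G" "x \<in> X" "x \<noteq> 0"
    and f: "Vector_Spaces.linear (*s) (*) f" "f x = 0"
  shows "(\<Sum>b \<in> {b \<in> B. x \<in> b}. card {y \<in> b. f y = 1}) = card ({y. f y = 1} - X) * lam"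
proof -
  let ?Y = "{y. f y = 1}"
  have "(\<Sum>b \<in> {b \<in> B. x \<in> b}. card {y \<in> b. f y = 1})
      = (\<Sum>b \<in> {b \<in> B. x \<in> b}. card {y \<in> ?Y. y \<in> b})"
    by (intro sum.cong) (auto intro: arg_cong[where f = card])
  also have "\<dots> = (\<Sum>y \<in> ?Y. card {b \<in> B. x \<in> b \<and> y \<in> b})"
    using sum.swap_restrict[of "{b \<in> B. x \<in> b}" ?Y "\<lambda>_ _. 1::nat" "\<lambda>b y. y \<in> b"]
    by (simp add: conj_ac)
  also have "\<dots> = (\<Sum>y \<in> ?Y. if y \<in> X then 0 else lam)"
  proof (rule sum.cong[OF refl])
    fix y assume "y \<in> ?Y"
    then have "y \<notin> vec.span {x}"
      using f by (auto simp: vec.span_singleton Vector_Spaces.linear_iff)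
    then show "card {b \<in> B. x \<in> b \<and> y \<in> b} = (if y \<in> X then 0 else lam)"
      by (rule q_GDD_blocks_through_two_points[OF GDD X])
  qed
  also have "\<dots> = card (?Y - X) * lam"
    by (simp add: sum.If_cases Diff_eq)
  finally show ?thesis .
qed

theorem lemma7:
  fixes G B :: "('a::{finite,field} ^ 'n) set set"
    and g k lam :: nat
  assumes "is_q_GDD g k lam G B"
    and "2 \<le> g" and "g \<le> k"
  shows "CARD('a) ^ (k - g) dvd lam"
proof -
  define q where "q = CARD('a)"
  define v where "v = vec.dim (UNIV :: ('a ^ 'n) set)"
  have "1 < card G"
    using assms(1) by (simp add: is_q_GDD_def)
  then obtain X where X: "X \<in> G" "vec.subspace X" "vec.dim X = g"
    using q_GDD_group_subspace[OF assms(1)] by fastforce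
  then obtain x z where xz: "x \<in> X" "z \<in> X" "x \<noteq> 0" "z \<notin> vec.span {x}"
    using subspace_obtain_independent_pair assms(2) by metis
  obtain f where f: "Vector_Spaces.linear (*s) (*) f" "f x = 0" "f z = 1"
    using exists_linear_functional_separating[OF xz(3,4)] by blast
  have "g < v"
    using q_GDD_group_dim_less[OF assms(1) X(1)] by (simp add: v_def)
  have "card {y. f y = 1} = q ^ (v - 1)"
    using card_level_set[OF f(1) vec.subspace_UNIV, of z] f(3) by (simp add: q_def v_def)
  moreover have "card ({y. f y = 1} \<inter> X) = q ^ (g - 1)"
    using card_level_set[OF f(1) X(2) xz(2)] f(3) X(3) by (simp add: q_def Int_def conj_commute)
  moreover have "q ^ (k - 1) dvd (\<Sum>b \<in> {b \<in> B. x \<in> b}. card {y \<in> b. f y = 1})"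
    using power_dvd_card_level_set[OF f(1)] q_GDD_block_subspace[OF assms(1)]
    by (intro dvd_sum) (auto simp: q_def)
  ultimately have "q ^ (g - 1 + (k - g)) dvd (q ^ (g - 1 + (v - g)) - q ^ (g - 1)) * lam"
    using q_GDD_incidences_affine_hyperplane[OF assms(1) X(1) xz(1,3) f(1,2)]
      assms(2,3) \<open>g < v\<close> by (simp add: card_Diff_subset_Int)
  then have "q ^ (k - g) dvd lam"
    by (rule power_dvd_of_power_dvd_mult_power_diff) (use \<open>g < v\<close> in \<open>auto simp: q_def\<close>)
  then show ?thesis
    by (simp add: q_def)
qed

end
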